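(* Let $U$ be a $d\times d$ unitary matrix, $U_{ij}=\langle a_i|b_j\rangle$ for two orthonormal bases $\{|a_i\rangle\}$, $\{|b_j\rangle\}$ of $\mathbb{C}^d$, and let $p_i=\langle a_i|\rho|a_i\rangle$, $q_j=\langle b_j|\rho|b_j\rangle$ for a state $\rho$ on $\mathbb{C}^d$. For $k=1,\dots,d$ let $s_k=\max\{\|M\|: M \text{ a submatrix of } U \text{ with } \#\mathrm{cols}(M)+\#\mathrm{rows}(M)=k+1\}$, where $\|M\|$ is the largest singular value, and let $W=(s_1,s_2-s_1,\dots,s_d-s_{d-1})$. Then for every Rényi order $0<\alpha\le 1$ (with $\alpha=1$ meaning the Shannon entropy), $$H_\alpha(p)+H_\alpha(q)\ge H_\alpha(W).$$
   Context: The Rényi entropy of order $\alpha\neq1$ of a probability vector $x$ is $H_\alpha(x)=\frac{1}{1-\alpha}\ln\sum_i x_i^\alpha$; its limit $\alpha\to1$ is the Shannon entropy $H(x)=-\sum_i x_i\ln x_i$ (with $0\ln 0=0$). A submatrix is obtained by selecting a nonempty set of rows and a nonempty set of columns. *)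

theory Defs
  imports Complex_Main
begin

text \<open>Vectors of C^d are represented as functions nat => complex, only the
  entries with index < d being relevant; matrices as nat => nat => complex.\<close>

definition cinner :: "nat \<Rightarrow> (nat \<Rightarrow> complex) \<Rightarrow> (nat \<Rightarrow> complex) \<Rightarrow> complex" where
  "cinner d x y = (\<Sum>k<d. cnj (x k) * y k)"

definition orthonormal_basis :: "nat \<Rightarrow> (nat \<Rightarrow> nat \<Rightarrow> complex) \<Rightarrow> bool" where
  "orthonormal_basis d a \<longleftrightarrow>
     (\<forall>i<d. \<forall>j<d. cinner d (a i) (a j) = (if i = j then 1 else 0))"

definition unitary_mat :: "nat \<Rightarrow> (nat \<Rightarrow> nat \<Rightarrow> complex) \<Rightarrow> bool" where
  "unitary_mat d U \<longleftrightarrow>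
     (\<forall>i<d. \<forall>j<d. (\<Sum>k<d. cnj (U k i) * U k j) = (if i = j then 1 else 0)) \<and>
     (\<forall>i<d. \<forall>j<d. (\<Sum>k<d. U i k * cnj (U j k)) = (if i = j then 1 else 0))"

definition mat_vec :: "nat \<Rightarrow> (nat \<Rightarrow> nat \<Rightarrow> complex) \<Rightarrow> (nat \<Rightarrow> complex) \<Rightarrow> (nat \<Rightarrow> complex)" where
  "mat_vec d A x = (\<lambda>i. \<Sum>j<d. A i j * x j)"

definition density_matrix :: "nat \<Rightarrow> (nat \<Rightarrow> nat \<Rightarrow> complex) \<Rightarrow> bool" where
  "density_matrix d \<rho> \<longleftrightarrow>
     (\<forall>i<d. \<forall>j<d. \<rho> j i = cnj (\<rho> i j)) \<and>
     (\<forall>x. 0 \<le> Re (cinner d x (mat_vec d \<rho> x))) \<and>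
     (\<Sum>i<d. \<rho> i i) = 1"

definition submatrix_norm :: "(nat \<Rightarrow> nat \<Rightarrow> complex) \<Rightarrow> nat set \<Rightarrow> nat set \<Rightarrow> real" where
  "submatrix_norm U R C =
     Sup {sqrt (\<Sum>i\<in>R. (cmod (\<Sum>j\<in>C. U i j * x j))\<^sup>2) | x.
            (\<Sum>j\<in>C. (cmod (x j))\<^sup>2) \<le> 1}"

definition s_coef :: "nat \<Rightarrow> (nat \<Rightarrow> nat \<Rightarrow> complex) \<Rightarrow> nat \<Rightarrow> real" where
  "s_coef d U k = Max {submatrix_norm U R C | R C.
       R \<subseteq> {..<d} \<and> C \<subseteq> {..<d} \<and> R \<noteq> {} \<and> C \<noteq> {} \<and> card R + card C = k + 1}"

definition W_vec :: "nat \<Rightarrow> (nat \<Rightarrow> nat \<Rightarrow> complex) \<Rightarrow> nat \<Rightarrow> real" where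
  "W_vec d U k = (if k = 1 then s_coef d U 1 else s_coef d U k - s_coef d U (k - 1))"

text \<open>Renyi entropy of order alpha of the vector x over the index set A;
  alpha = 1 gives Shannon entropy (ln 0 = 0 in Isabelle, so 0 ln 0 = 0).\<close>
definition renyi :: "real \<Rightarrow> nat set \<Rightarrow> (nat \<Rightarrow> real) \<Rightarrow> real" where
  "renyi \<alpha> A x = (if \<alpha> = 1 then - (\<Sum>i\<in>A. x i * ln (x i))
                   else ln (\<Sum>i\<in>A. x i powr \<alpha>) / (1 - \<alpha>))"

end

(* For a pure state, the weight
   p(R) + q(C) on a set R of a-vectors and a set C of b-vectors is at most 1 + \<parallel>U_RC\<parallel>: the
   projections of the state onto span a_R and span b_C overlap by at most \<parallel>U_RC\<parallel>.  This persists
   for mixed states, which are sums of pure ones.  Hence any k + 1 entries of the concatenation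
   (p, q) sum to at most 1 + s_k, i.e. (p, q) is majorised by (1, W, 0, ..., 0), and Karamata's
   inequality gives \<Sum>\<phi>(p) + \<Sum>\<phi>(q) \<ge> \<phi>(1) + \<Sum>\<phi>(W) for every concave \<phi> with \<phi>(0) = 0.  For
   \<phi>(t) = -t ln t this is the Shannon case; for \<phi>(t) = t^\<alpha> with \<alpha> < 1 it reads 1 + Z \<le> X + Y for
   the power sums X, Y, Z \<ge> 1 of p, q, W, whence Z \<le> X Y, which is the Renyi bound. *)

theory Submission
  imports Defs "HOL-Analysis.Convex" "HOL-Analysis.L2_Norm" "Jordan_Normal_Form.Determinant"
begin

section \<open>The inner product of \<open>\<complex>\<^sup>d\<close>\<close>

lemma cinner_sum_right:
  "cinner d u (\<lambda>k. \<Sum>j\<in>J. c j * v j k) = (\<Sum>j\<in>J. c j * cinner d u (v j))"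
  unfolding cinner_def by (simp add: sum_distrib_left sum.swap[of _ J] mult.left_commute)

lemma cinner_sum_left:
  "cinner d (\<lambda>k. \<Sum>i\<in>I. c i * v i k) w = (\<Sum>i\<in>I. cnj (c i) * cinner d (v i) w)"
  unfolding cinner_def by (simp add: sum_distrib_left sum_distrib_right sum.swap[of _ I] mult.assoc)

lemma cinner_commute_cnj: "cinner d v u = cnj (cinner d u v)"
  unfolding cinner_def by (simp add: mult.commute)

lemma cinner_add_right: "cinner d u (\<lambda>k. v k + w k) = cinner d u v + cinner d u w"
  unfolding cinner_def by (simp add: distrib_left sum.distrib)

lemma cinner_add_left: "cinner d (\<lambda>k. v k + w k) u = cinner d v u + cinner d w u"
  unfolding cinner_def by (simp add: distrib_right sum.distrib)

lemma cinner_self: "cinner d u u = of_real (\<Sum>k<d. (cmod (u k))\<^sup>2)"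
  unfolding cinner_def of_real_sum complex_norm_square by (simp add: mult.commute)

lemma cinner_Cauchy_Schwarz:
  "cmod (cinner d u v) \<le> sqrt (\<Sum>k<d. (cmod (u k))\<^sup>2) * sqrt (\<Sum>k<d. (cmod (v k))\<^sup>2)"
proof -
  have "cmod (cinner d u v) \<le> (\<Sum>k<d. cmod (cnj (u k) * v k))"
    unfolding cinner_def by (rule norm_sum)
  also have "\<dots> = (\<Sum>k<d. \<bar>cmod (u k)\<bar> * \<bar>cmod (v k)\<bar>)" by (simp add: norm_mult)
  also have "\<dots> \<le> L2_set (\<lambda>k. cmod (u k)) {..<d} * L2_set (\<lambda>k. cmod (v k)) {..<d}"
    by (rule L2_set_mult_ineq)
  finally show ?thesis by (simp add: L2_set_def)
qed

section \<open>Orthonormal bases and unitary matrices\<close>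

text \<open>Orthonormal rows of a square matrix are also orthonormal columns, since a one-sided
  inverse of a square matrix is two-sided.\<close>

lemma orthonormal_basis_completeness:
  assumes "orthonormal_basis d a" and "k < d" and "l < d"
  shows "(\<Sum>i<d. cnj (a i k) * a i l) = (if k = l then 1 else 0)"
proof -
  define M where "M = mat d d (\<lambda>(i,k). cnj (a i k))"
  define N where "N = mat d d (\<lambda>(k,j). a j k)"
  have M: "M \<in> carrier_mat d d" and N: "N \<in> carrier_mat d d" by (auto simp: M_def N_def)
  have "M * N = 1\<^sub>m d"
  proof (rule eq_matI)
    fix i j assume ij: "i < dim_row (1\<^sub>m d)" "j < dim_col (1\<^sub>m d)"
    hence "(M * N) $$ (i, j) = (\<Sum>k = 0..<d. cnj (a i k) * a j k)"
      by (auto simp: M_def N_def scalar_prod_def)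
    also have "\<dots> = cinner d (a i) (a j)" by (simp add: cinner_def atLeast0LessThan)
    also have "\<dots> = 1\<^sub>m d $$ (i, j)" using assms(1) ij by (auto simp: orthonormal_basis_def)
    finally show "(M * N) $$ (i, j) = 1\<^sub>m d $$ (i, j)" .
  qed (auto simp: M_def N_def)
  hence NM: "N * M = 1\<^sub>m d" using mat_mult_left_right_inverse[OF M N] by blast
  have "(N * M) $$ (l, k) = (\<Sum>i = 0..<d. a i l * cnj (a i k))"
    using assms by (auto simp: M_def N_def scalar_prod_def)
  hence "(\<Sum>i<d. a i l * cnj (a i k)) = (if k = l then 1 else 0)"
    using NM assms by (auto simp: atLeast0LessThan)
  thus ?thesis by (simp add: mult.commute)
qed

lemma orthonormal_basis_Parseval:
  assumes "orthonormal_basis d a"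
  shows "(\<Sum>i<d. (cmod (cinner d (a i) \<psi>))\<^sup>2) = (\<Sum>k<d. (cmod (\<psi> k))\<^sup>2)"
proof -
  let ?F = "\<lambda>i k l. cnj (a i k) * \<psi> k * (a i l * cnj (\<psi> l))"
  have "complex_of_real (\<Sum>i<d. (cmod (cinner d (a i) \<psi>))\<^sup>2) = (\<Sum>i<d. \<Sum>k<d. \<Sum>l<d. ?F i k l)"
    unfolding of_real_sum complex_norm_square cinner_def cnj_sum sum_product by simp
  also have "\<dots> = (\<Sum>k<d. \<Sum>l<d. \<Sum>i<d. ?F i k l)"
    by (subst sum.swap) (rule sum.cong[OF refl], rule sum.swap)
  also have "\<dots> = (\<Sum>k<d. \<Sum>l<d. \<psi> k * cnj (\<psi> l) * (\<Sum>i<d. cnj (a i k) * a i l))"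
    by (simp add: sum_distrib_left mult_ac)
  also have "\<dots> = (\<Sum>k<d. \<Sum>l<d. \<psi> k * cnj (\<psi> l) * (if l = k then 1 else 0))"
    by (intro sum.cong refl) (use orthonormal_basis_completeness[OF assms] in auto)
  also have "\<dots> = (\<Sum>k<d. \<psi> k * cnj (\<psi> k))"
    by (rule sum.cong[OF refl]) (simp add: if_distrib[of "\<lambda>t. _ * t"] cong: if_cong)
  also have "\<dots> = complex_of_real (\<Sum>k<d. (cmod (\<psi> k))\<^sup>2)"
    unfolding of_real_sum complex_norm_square ..
  finally show ?thesis by (simp only: of_real_eq_iff)
qed

lemma unitary_mat_norm_preserving:
  assumes "unitary_mat d U"
  shows "(\<Sum>i<d. (cmod (\<Sum>j<d. U i j * x j))\<^sup>2) = (\<Sum>j<d. (cmod (x j))\<^sup>2)"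
proof -
  have col: "(\<Sum>i<d. cnj (U i k) * U i j) = (if k = j then 1 else 0)" if "j < d" "k < d" for j k
    using assms that unfolding unitary_mat_def by blast
  let ?F = "\<lambda>i j k. U i j * x j * (cnj (U i k) * cnj (x k))"
  have "complex_of_real (\<Sum>i<d. (cmod (\<Sum>j<d. U i j * x j))\<^sup>2) = (\<Sum>i<d. \<Sum>j<d. \<Sum>k<d. ?F i j k)"
    unfolding of_real_sum complex_norm_square cnj_sum sum_product by (simp add: mult_ac)
  also have "\<dots> = (\<Sum>j<d. \<Sum>k<d. \<Sum>i<d. ?F i j k)"
    by (subst sum.swap) (rule sum.cong[OF refl], rule sum.swap)
  also have "\<dots> = (\<Sum>j<d. \<Sum>k<d. x j * cnj (x k) * (\<Sum>i<d. cnj (U i k) * U i j))"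
    by (simp add: sum_distrib_left mult_ac)
  also have "\<dots> = (\<Sum>j<d. \<Sum>k<d. x j * cnj (x k) * (if k = j then 1 else 0))"
    by (intro sum.cong refl) (simp add: col)
  also have "\<dots> = (\<Sum>j<d. x j * cnj (x j))"
    by (rule sum.cong[OF refl]) (simp add: if_distrib[of "\<lambda>t. _ * t"] cong: if_cong)
  also have "\<dots> = complex_of_real (\<Sum>j<d. (cmod (x j))\<^sup>2)"
    unfolding of_real_sum complex_norm_square ..
  finally show ?thesis by (simp only: of_real_eq_iff)
qed

lemma cinner_basis_expansion:
  assumes "orthonormal_basis d a" "I \<subseteq> {..<d}" "i \<in> I"
  shows "cinner d (a i) (\<lambda>k. \<Sum>i'\<in>I. c i' * a i' k) = c i"
proof -
  have "cinner d (a i) (\<lambda>k. \<Sum>i'\<in>I. c i' * a i' k) = (\<Sum>i'\<in>I. c i' * cinner d (a i) (a i'))"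
    by (rule cinner_sum_right)
  also have "\<dots> = (\<Sum>i'\<in>I. if i' = i then c i' else 0)"
  proof (rule sum.cong[OF refl])
    fix i' assume "i' \<in> I"
    hence "i' < d" "i < d" using assms(2,3) by auto
    thus "c i' * cinner d (a i) (a i') = (if i' = i then c i' else 0)"
      using assms(1) unfolding orthonormal_basis_def by auto
  qed
  also have "\<dots> = c i" using assms(3) finite_subset[OF assms(2)] by simp
  finally show ?thesis .
qed

lemma cinner_self_basis_expansion:
  assumes "orthonormal_basis d a" "I \<subseteq> {..<d}"
  shows "cinner d (\<lambda>k. \<Sum>i\<in>I. c i * a i k) (\<lambda>k. \<Sum>i\<in>I. c i * a i k) = of_real (\<Sum>i\<in>I. (cmod (c i))\<^sup>2)"
proof -
  have "cinner d (\<lambda>k. \<Sum>i\<in>I. c i * a i k) (\<lambda>k. \<Sum>i\<in>I. c i * a i k) =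
     (\<Sum>i\<in>I. cnj (c i) * cinner d (a i) (\<lambda>k. \<Sum>i\<in>I. c i * a i k))" by (rule cinner_sum_left)
  also have "\<dots> = (\<Sum>i\<in>I. cnj (c i) * c i)"
    by (rule sum.cong[OF refl]) (simp add: cinner_basis_expansion[OF assms])
  also have "\<dots> = of_real (\<Sum>i\<in>I. (cmod (c i))\<^sup>2)"
    unfolding of_real_sum complex_norm_square by (simp add: mult.commute)
  finally show ?thesis .
qed

lemma cinner_basis_projection:
  "cinner d \<psi> (\<lambda>k. \<Sum>i\<in>I. cinner d (a i) \<psi> * a i k) = of_real (\<Sum>i\<in>I. (cmod (cinner d (a i) \<psi>))\<^sup>2)"
proof -
  have "cinner d \<psi> (\<lambda>k. \<Sum>i\<in>I. cinner d (a i) \<psi> * a i k) = (\<Sum>i\<in>I. cinner d (a i) \<psi> * cinner d \<psi> (a i))"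
    by (rule cinner_sum_right)
  also have "\<dots> = (\<Sum>i\<in>I. cinner d (a i) \<psi> * cnj (cinner d (a i) \<psi>))"
    by (simp add: cinner_commute_cnj[of d \<psi>])
  also have "\<dots> = of_real (\<Sum>i\<in>I. (cmod (cinner d (a i) \<psi>))\<^sup>2)"
    unfolding of_real_sum complex_norm_square ..
  finally show ?thesis .
qed

section \<open>Norms of submatrices\<close>

definition submatrix_image_norms :: "(nat \<Rightarrow> nat \<Rightarrow> complex) \<Rightarrow> nat set \<Rightarrow> nat set \<Rightarrow> real set" where
  "submatrix_image_norms U R C = {sqrt (\<Sum>i\<in>R. (cmod (\<Sum>j\<in>C. U i j * x j))\<^sup>2) | x.
            (\<Sum>j\<in>C. (cmod (x j))\<^sup>2) \<le> 1}"

lemma submatrix_norm_eq_Sup: "submatrix_norm U R C = Sup (submatrix_image_norms U R C)"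
  unfolding submatrix_norm_def submatrix_image_norms_def ..

lemma submatrix_image_norms_nonempty: "0 \<in> submatrix_image_norms U R C"
  unfolding submatrix_image_norms_def by (intro CollectI exI[of _ "\<lambda>_. 0"]) simp

lemma sum_if_mem_subset:
  assumes "finite C'" "C \<subseteq> C'"
  shows "(\<Sum>j\<in>C'. if j \<in> C then f j else 0) = sum f C"
  using sum.inter_restrict[OF assms(1), of f C] Int_absorb1[OF assms(2)] by simp

lemma unitary_submatrix_contraction:
  assumes "unitary_mat d U" "R \<subseteq> {..<d}" "C \<subseteq> {..<d}"
  shows "(\<Sum>i\<in>R. (cmod (\<Sum>j\<in>C. U i j * x j))\<^sup>2) \<le> (\<Sum>j\<in>C. (cmod (x j))\<^sup>2)"
proof -
  define x' where "x' j = (if j \<in> C then x j else 0)" for j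
  have "U i j * x' j = (if j \<in> C then U i j * x j else 0)" "(cmod (x' j))\<^sup>2 = (if j \<in> C then (cmod (x j))\<^sup>2 else 0)"
    for i j by (simp_all add: x'_def)
  hence Ux': "(\<Sum>j<d. U i j * x' j) = (\<Sum>j\<in>C. U i j * x j)"
    and x': "(\<Sum>j<d. (cmod (x' j))\<^sup>2) = (\<Sum>j\<in>C. (cmod (x j))\<^sup>2)" for i
    by (simp_all add: sum_if_mem_subset[OF _ assms(3)])
  have "(\<Sum>i\<in>R. (cmod (\<Sum>j\<in>C. U i j * x j))\<^sup>2) \<le> (\<Sum>i<d. (cmod (\<Sum>j\<in>C. U i j * x j))\<^sup>2)"
    by (rule sum_mono2) (use assms(2) in auto)
  also have "\<dots> = (\<Sum>i<d. (cmod (\<Sum>j<d. U i j * x' j))\<^sup>2)" by (simp add: Ux')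
  also have "\<dots> = (\<Sum>j\<in>C. (cmod (x j))\<^sup>2)" by (simp add: unitary_mat_norm_preserving[OF assms(1)] x')
  finally show ?thesis .
qed

lemma submatrix_image_norms_le_one:
  assumes "unitary_mat d U" "R \<subseteq> {..<d}" "C \<subseteq> {..<d}" "t \<in> submatrix_image_norms U R C"
  shows "t \<le> 1"
  using assms(4) unitary_submatrix_contraction[OF assms(1-3)]
  unfolding submatrix_image_norms_def by (force intro: order.trans)

lemma submatrix_image_norms_bdd_above:
  "unitary_mat d U \<Longrightarrow> R \<subseteq> {..<d} \<Longrightarrow> C \<subseteq> {..<d} \<Longrightarrow> bdd_above (submatrix_image_norms U R C)"
  by (rule bdd_aboveI[where M = 1]) (rule submatrix_image_norms_le_one)

lemma submatrix_norm_upper: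
  assumes "unitary_mat d U" "R \<subseteq> {..<d}" "C \<subseteq> {..<d}" "t \<in> submatrix_image_norms U R C"
  shows "t \<le> submatrix_norm U R C"
  unfolding submatrix_norm_eq_Sup by (rule cSup_upper[OF assms(4) submatrix_image_norms_bdd_above[OF assms(1-3)]])

lemma submatrix_norm_le_one:
  assumes "unitary_mat d U" "R \<subseteq> {..<d}" "C \<subseteq> {..<d}"
  shows "submatrix_norm U R C \<le> 1"
  unfolding submatrix_norm_eq_Sup
proof (rule cSup_least)
  show "submatrix_image_norms U R C \<noteq> {}" using submatrix_image_norms_nonempty by blast
qed (rule submatrix_image_norms_le_one[OF assms])

lemma submatrix_norm_nonneg:
  "unitary_mat d U \<Longrightarrow> R \<subseteq> {..<d} \<Longrightarrow> C \<subseteq> {..<d} \<Longrightarrow> 0 \<le> submatrix_norm U R C"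
  by (rule submatrix_norm_upper[OF _ _ _ submatrix_image_norms_nonempty])

lemma submatrix_norm_mono_cols:
  assumes "unitary_mat d U" "R \<subseteq> {..<d}" "C \<subseteq> C'" "C' \<subseteq> {..<d}"
  shows "submatrix_norm U R C \<le> submatrix_norm U R C'"
  unfolding submatrix_norm_eq_Sup
proof (rule cSup_subset_mono)
  show "submatrix_image_norms U R C \<noteq> {}" using submatrix_image_norms_nonempty by blast
  show "bdd_above (submatrix_image_norms U R C')" by (rule submatrix_image_norms_bdd_above[OF assms(1,2,4)])
  have fin: "finite C'" using assms(4) finite_subset by blast
  show "submatrix_image_norms U R C \<subseteq> submatrix_image_norms U R C'"
  proof
    fix t assume "t \<in> submatrix_image_norms U R C"
    then obtain x where t: "t = sqrt (\<Sum>i\<in>R. (cmod (\<Sum>j\<in>C. U i j * x j))\<^sup>2)"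
      and x: "(\<Sum>j\<in>C. (cmod (x j))\<^sup>2) \<le> 1" unfolding submatrix_image_norms_def by blast
    define x' where "x' j = (if j \<in> C then x j else 0)" for j
    have "U i j * x' j = (if j \<in> C then U i j * x j else 0)" "(cmod (x' j))\<^sup>2 = (if j \<in> C then (cmod (x j))\<^sup>2 else 0)"
      for i j by (simp_all add: x'_def)
    hence "t = sqrt (\<Sum>i\<in>R. (cmod (\<Sum>j\<in>C'. U i j * x' j))\<^sup>2)" "(\<Sum>j\<in>C'. (cmod (x' j))\<^sup>2) \<le> 1"
      using x by (simp_all add: t sum_if_mem_subset[OF fin assms(3)])
    thus "t \<in> submatrix_image_norms U R C'" unfolding submatrix_image_norms_def by blast
  qed
qed

lemma submatrix_norm_bound:
  assumes "unitary_mat d U" "R \<subseteq> {..<d}" "C \<subseteq> {..<d}"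
  shows "sqrt (\<Sum>i\<in>R. (cmod (\<Sum>j\<in>C. U i j * \<beta> j))\<^sup>2)
    \<le> submatrix_norm U R C * sqrt (\<Sum>j\<in>C. (cmod (\<beta> j))\<^sup>2)"
proof (cases "(\<Sum>j\<in>C. (cmod (\<beta> j))\<^sup>2) = 0")
  case True
  have "finite C" using assms(3) finite_subset by blast
  hence "\<forall>j\<in>C. \<beta> j = 0" using True by (simp add: sum_nonneg_eq_0_iff)
  thus ?thesis using submatrix_norm_nonneg[OF assms] True by simp
next
  case False
  define s where "s = sqrt (\<Sum>j\<in>C. (cmod (\<beta> j))\<^sup>2)"
  have "0 < (\<Sum>j\<in>C. (cmod (\<beta> j))\<^sup>2)"
    using False sum_nonneg[of C "\<lambda>j. (cmod (\<beta> j))\<^sup>2"] by (simp add: less_le)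
  hence s: "0 < s" "s\<^sup>2 = (\<Sum>j\<in>C. (cmod (\<beta> j))\<^sup>2)" by (simp_all add: s_def)
  define x where "x j = \<beta> j / complex_of_real s" for j
  have "(\<Sum>j\<in>C. (cmod (x j))\<^sup>2) = (\<Sum>j\<in>C. (cmod (\<beta> j))\<^sup>2) / s\<^sup>2"
    using s(1) by (simp add: x_def norm_divide power_divide sum_divide_distrib)
  hence x: "(\<Sum>j\<in>C. (cmod (x j))\<^sup>2) \<le> 1" using s by simp
  have "(\<Sum>i\<in>R. (cmod (\<Sum>j\<in>C. U i j * x j))\<^sup>2) = (\<Sum>i\<in>R. (cmod (\<Sum>j\<in>C. U i j * \<beta> j))\<^sup>2) / s\<^sup>2"
    using s(1) by (simp add: x_def sum_divide_distrib[symmetric] norm_divide power_divide)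
  hence "sqrt (\<Sum>i\<in>R. (cmod (\<Sum>j\<in>C. U i j * \<beta> j))\<^sup>2) / s
      = sqrt (\<Sum>i\<in>R. (cmod (\<Sum>j\<in>C. U i j * x j))\<^sup>2)"
    using s(1) by (simp add: real_sqrt_divide)
  also have "\<dots> \<le> submatrix_norm U R C"
    using x by (intro submatrix_norm_upper[OF assms]) (unfold submatrix_image_norms_def, blast)
  finally show ?thesis using s(1) by (simp add: s_def divide_le_eq)
qed

section \<open>The bound for a pure state\<close>

text \<open>Here \<open>x\<close> and \<open>y\<close> are the orthogonal projections of \<open>\<psi>\<close> onto two subspaces. Then
  \<open>(P + Q)\<^sup>2 = \<bar>\<langle>\<psi>, x + y\<rangle>\<bar>\<^sup>2 \<le> \<parallel>\<psi>\<parallel>\<^sup>2 \<parallel>x + y\<parallel>\<^sup>2\<close>, and the overlap bound together with AM-GM gives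
  \<open>\<parallel>x + y\<parallel>\<^sup>2 \<le> (1 + c)(P + Q)\<close>.\<close>

lemma sum_projections_le:
  fixes \<psi> x y :: "nat \<Rightarrow> complex"
  assumes px: "cinner d \<psi> x = of_real P" and xx: "cinner d x x = of_real P"
    and py: "cinner d \<psi> y = of_real Q" and yy: "cinner d y y = of_real Q"
    and xy: "cmod (cinner d x y) \<le> c * sqrt P * sqrt Q" and c0: "0 \<le> c"
  shows "P + Q \<le> (1 + c) * (\<Sum>k<d. (cmod (\<psi> k))\<^sup>2)"
proof -
  define N where "N = (\<Sum>k<d. (cmod (\<psi> k))\<^sup>2)"
  define M where "M = (\<Sum>k<d. (cmod (x k + y k))\<^sup>2)"
  have "P = (\<Sum>k<d. (cmod (x k))\<^sup>2)" "Q = (\<Sum>k<d. (cmod (y k))\<^sup>2)"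
    using xx yy by (simp_all only: cinner_self of_real_eq_iff)
  hence P0: "0 \<le> P" and Q0: "0 \<le> Q" by (simp_all add: sum_nonneg)
  have N0: "0 \<le> N" and M0: "0 \<le> M" unfolding N_def M_def by (simp_all add: sum_nonneg)
  have "complex_of_real M = cinner d x x + cinner d y y + (cinner d x y + cnj (cinner d x y))"
    unfolding M_def cinner_self[symmetric]
    by (simp add: cinner_add_right cinner_add_left cinner_commute_cnj[of d y x])
  also have "\<dots> = of_real (P + Q + 2 * Re (cinner d x y))"
    by (simp add: xx yy complex_add_cnj)
  finally have M: "M = P + Q + 2 * Re (cinner d x y)" by (simp only: of_real_eq_iff)
  have "M \<le> P + Q + c * (2 * (sqrt P * sqrt Q))"
    using M xy complex_Re_le_cmod[of "cinner d x y"] by (simp add: mult_ac)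
  also have "\<dots> \<le> P + Q + c * (P + Q)"
    using arith_geo_mean_sqrt[OF P0 Q0] by (intro add_left_mono mult_left_mono c0) (simp add: real_sqrt_mult)
  finally have Mb: "M \<le> (1 + c) * (P + Q)" by (simp add: algebra_simps)
  have "P + Q = cmod (cinner d \<psi> (\<lambda>k. x k + y k))"
    using P0 Q0 by (simp add: cinner_add_right px py flip: of_real_add)
  also have "\<dots> \<le> sqrt N * sqrt M" unfolding N_def M_def by (rule cinner_Cauchy_Schwarz)
  finally have "(P + Q)\<^sup>2 \<le> (sqrt N * sqrt M)\<^sup>2" by (rule power_mono) (use P0 Q0 in simp)
  also have "\<dots> = N * M" using N0 M0 by (simp add: power_mult_distrib)
  also have "\<dots> \<le> N * ((1 + c) * (P + Q))" by (rule mult_left_mono[OF Mb N0])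
  finally have "(P + Q) * (P + Q) \<le> (N * (1 + c)) * (P + Q)" by (simp add: power2_eq_square mult_ac)
  hence "P + Q \<le> N * (1 + c)" using P0 Q0 N0 c0
    by (cases "P + Q = 0") (simp_all add: mult_le_cancel_right)
  thus ?thesis by (simp add: N_def mult.commute)
qed

lemma cinner_basis_expansions_le:
  assumes U: "unitary_mat d U" and oa: "orthonormal_basis d a" and ob: "orthonormal_basis d b"
    and Uab: "\<forall>i<d. \<forall>j<d. U i j = cinner d (a i) (b j)"
    and R: "R \<subseteq> {..<d}" and C: "C \<subseteq> {..<d}"
  shows "cmod (cinner d (\<lambda>k. \<Sum>i\<in>R. \<alpha> i * a i k) (\<lambda>k. \<Sum>j\<in>C. \<beta> j * b j k))
    \<le> submatrix_norm U R C * sqrt (\<Sum>i\<in>R. (cmod (\<alpha> i))\<^sup>2) * sqrt (\<Sum>j\<in>C. (cmod (\<beta> j))\<^sup>2)"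
proof -
  define G where "G i = (\<Sum>j\<in>C. U i j * \<beta> j)" for i
  have "cinner d (\<lambda>k. \<Sum>i\<in>R. \<alpha> i * a i k) (\<lambda>k. \<Sum>j\<in>C. \<beta> j * b j k)
      = (\<Sum>i\<in>R. cnj (\<alpha> i) * (\<Sum>j\<in>C. \<beta> j * cinner d (a i) (b j)))"
    by (simp add: cinner_sum_left cinner_sum_right)
  also have "\<dots> = (\<Sum>i\<in>R. cnj (\<alpha> i) * G i)"
  proof (intro sum.cong refl arg_cong[where f = "(*) _"])
    fix i assume "i \<in> R"
    thus "(\<Sum>j\<in>C. \<beta> j * cinner d (a i) (b j)) = G i"
      using R C Uab unfolding G_def by (intro sum.cong refl) (auto simp: mult.commute subset_iff)
  qed
  finally have "cmod (cinner d (\<lambda>k. \<Sum>i\<in>R. \<alpha> i * a i k) (\<lambda>k. \<Sum>j\<in>C. \<beta> j * b j k))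
      \<le> (\<Sum>i\<in>R. \<bar>cmod (\<alpha> i)\<bar> * \<bar>cmod (G i)\<bar>)"
    by (simp add: norm_mult order.trans[OF norm_sum])
  also have "\<dots> \<le> L2_set (\<lambda>i. cmod (\<alpha> i)) R * L2_set (\<lambda>i. cmod (G i)) R"
    by (rule L2_set_mult_ineq)
  also have "\<dots> \<le> sqrt (\<Sum>i\<in>R. (cmod (\<alpha> i))\<^sup>2) * (submatrix_norm U R C * sqrt (\<Sum>j\<in>C. (cmod (\<beta> j))\<^sup>2))"
    unfolding L2_set_def G_def by (intro mult_left_mono submatrix_norm_bound[OF U R C]) (simp add: sum_nonneg)
  finally show ?thesis by (simp add: mult_ac)
qed

lemma pure_state_bound:
  assumes U: "unitary_mat d U" and oa: "orthonormal_basis d a" and ob: "orthonormal_basis d b"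
    and Uab: "\<forall>i<d. \<forall>j<d. U i j = cinner d (a i) (b j)"
    and R: "R \<subseteq> {..<d}" and C: "C \<subseteq> {..<d}"
  shows "(\<Sum>i\<in>R. (cmod (cinner d (a i) \<psi>))\<^sup>2) + (\<Sum>j\<in>C. (cmod (cinner d (b j) \<psi>))\<^sup>2)
     \<le> (1 + submatrix_norm U R C) * (\<Sum>k<d. (cmod (\<psi> k))\<^sup>2)"
  by (rule sum_projections_le[where x = "\<lambda>k. \<Sum>i\<in>R. cinner d (a i) \<psi> * a i k"
        and y = "\<lambda>k. \<Sum>j\<in>C. cinner d (b j) \<psi> * b j k"])
    (rule cinner_basis_projection cinner_self_basis_expansion[OF oa R] cinner_self_basis_expansion[OF ob C]
      cinner_basis_expansions_le[OF U oa ob Uab R C] submatrix_norm_nonneg[OF U R C])+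

section \<open>Positive semidefinite matrices\<close>

definition positive_semidef :: "nat \<Rightarrow> (nat \<Rightarrow> nat \<Rightarrow> complex) \<Rightarrow> bool" where
  "positive_semidef n \<rho> \<longleftrightarrow>
     (\<forall>i<n. \<forall>j<n. \<rho> j i = cnj (\<rho> i j)) \<and> (\<forall>x. 0 \<le> Re (cinner n x (mat_vec n \<rho> x)))"

text \<open>\<open>\<rho> = \<Sum>\<^sub>m |v\<^sub>m\<rangle>\<langle>v\<^sub>m|\<close>, with the vectors \<open>v\<^sub>m\<close> given as the rows of \<open>v\<close>.\<close>

definition gram_decomp :: "nat \<Rightarrow> (nat \<Rightarrow> nat \<Rightarrow> complex) \<Rightarrow> (nat \<Rightarrow> nat \<Rightarrow> complex) \<Rightarrow> bool" where
  "gram_decomp n \<rho> v \<longleftrightarrow> (\<forall>k<n. \<forall>l<n. \<rho> k l = (\<Sum>m<n. v m k * cnj (v m l)))"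

lemma positive_semidef_quadratic_form:
  "positive_semidef n \<rho> \<Longrightarrow> 0 \<le> Re (\<Sum>k<n. cnj (x k) * (\<Sum>l<n. \<rho> k l * x l))"
  unfolding positive_semidef_def cinner_def mat_vec_def by blast

lemma positive_semidef_hermitian:
  "positive_semidef n \<rho> \<Longrightarrow> i < n \<Longrightarrow> j < n \<Longrightarrow> \<rho> j i = cnj (\<rho> i j)"
  unfolding positive_semidef_def by blast

lemma sum_mult_delta:
  "k < (n::nat) \<Longrightarrow> (\<Sum>l<n. f l * (if l = k then (c::complex) else 0)) = f k * c"
  by (simp add: if_distrib[of "\<lambda>t. _ * t"] cong: if_cong)

lemma quadratic_form_single:
  fixes k n :: nat
  assumes "k < n"
  shows "(\<Sum>j<n. cnj (if j = k then u else 0) * (\<Sum>l<n. \<rho> j l * (if l = k then u else 0)))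
     = cnj u * \<rho> k k * u"
proof -
  have inner: "(\<Sum>l<n. \<rho> j l * (if l = k then u else 0)) = \<rho> j k * u" for j
    using sum_mult_delta[OF assms, of "\<rho> j"] by simp
  have "(\<Sum>j<n. cnj (if j = k then u else 0) * (\<rho> j k * u)) = (\<Sum>j<n. (\<rho> j k * u) * (if j = k then cnj u else 0))"
    by (rule sum.cong) auto
  also have "\<dots> = \<rho> k k * u * cnj u" using sum_mult_delta[OF assms, of "\<lambda>j. \<rho> j k * u"] by simp
  finally show ?thesis by (simp add: inner)
qed

lemma quadratic_form_pair:
  fixes k m n :: nat
  assumes "k < n" "m < n" "k \<noteq> m"
  shows "(\<Sum>j<n. cnj (if j = k then u else if j = m then c else 0) *
            (\<Sum>l<n. \<rho> j l * (if l = k then u else if l = m then c else 0)))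
     = cnj u * (\<rho> k k * u + \<rho> k m * c) + cnj c * (\<rho> m k * u + \<rho> m m * c)"
proof -
  have split: "(if j = k then u else if j = m then c else 0) = (if j = k then u else 0) + (if j = m then c else 0)"
    for j using assms by auto
  have inner: "(\<Sum>l<n. \<rho> j l * (if l = k then u else if l = m then c else 0)) = \<rho> j k * u + \<rho> j m * c" for j
    unfolding split distrib_left sum.distrib
    using sum_mult_delta[OF assms(1), of "\<rho> j"] sum_mult_delta[OF assms(2), of "\<rho> j"] by simp
  have "(\<Sum>j<n. cnj (if j = k then u else if j = m then c else 0) * (\<rho> j k * u + \<rho> j m * c)) =
     (\<Sum>j<n. (\<rho> j k * u + \<rho> j m * c) * (if j = k then cnj u else 0)
           + (\<rho> j k * u + \<rho> j m * c) * (if j = m then cnj c else 0))"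
    using assms by (intro sum.cong) (auto simp: algebra_simps)
  also have "\<dots> = (\<rho> k k * u + \<rho> k m * c) * cnj u + (\<rho> m k * u + \<rho> m m * c) * cnj c"
    unfolding sum.distrib using assms by (simp add: sum_mult_delta)
  finally show ?thesis by (simp add: inner mult.commute)
qed

lemma positive_semidef_diag:
  assumes "positive_semidef n \<rho>" "k < n"
  shows "\<rho> k k = of_real (Re (\<rho> k k))" "0 \<le> Re (\<rho> k k)"
proof -
  have "\<rho> k k = cnj (\<rho> k k)" using positive_semidef_hermitian[OF assms(1,2,2)] .
  thus "\<rho> k k = of_real (Re (\<rho> k k))" using Reals_cnj_iff of_real_Re by metis
  show "0 \<le> Re (\<rho> k k)"
    using positive_semidef_quadratic_form[OF assms(1), of "\<lambda>j. if j = k then 1 else 0"]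
      quadratic_form_single[OF assms(2), of 1 \<rho>] by simp
qed

text \<open>A vanishing diagonal entry forces its column to vanish: otherwise the quadratic form
  is negative at \<open>e\<^sub>k - \<tau> \<rho>\<^sub>k\<^sub>n e\<^sub>n\<close> for large \<open>\<tau>\<close>.\<close>

lemma positive_semidef_zero_diag:
  assumes "positive_semidef (Suc n) \<rho>" "\<rho> n n = 0" "k < n"
  shows "\<rho> k n = 0"
proof (rule ccontr)
  let ?b = "\<rho> k n"
  assume b: "?b \<noteq> 0"
  have herm: "\<rho> n k = cnj ?b" using positive_semidef_hermitian[OF assms(1), of k n] assms(3) by simp
  define r where "r = Re (\<rho> k k)"
  have r: "\<rho> k k = of_real r" "0 \<le> r"
    using positive_semidef_diag[OF assms(1), of k] assms(3) by (auto simp: r_def)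
  define \<tau> where "\<tau> = (r + 1) / (cmod ?b)\<^sup>2"
  define c where "c = - of_real \<tau> * cnj ?b"
  have "0 \<le> Re (\<Sum>j<Suc n. cnj (if j = k then 1 else if j = n then c else 0) *
            (\<Sum>l<Suc n. \<rho> j l * (if l = k then 1 else if l = n then c else 0)))"
    by (rule positive_semidef_quadratic_form[OF assms(1)])
  also have "\<dots> = Re (\<rho> k k + ?b * c + cnj c * cnj ?b)"
    using quadratic_form_pair[of k "Suc n" n 1 c \<rho>] assms herm by simp
  also have "?b * c = - of_real \<tau> * (?b * cnj ?b)" by (simp add: c_def)
  also have "cnj c * cnj ?b = - of_real \<tau> * (?b * cnj ?b)" by (simp add: c_def)
  also have "?b * cnj ?b = of_real ((cmod ?b)\<^sup>2)" by (rule complex_norm_square[symmetric])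
  also have "Re (\<rho> k k + - of_real \<tau> * of_real ((cmod ?b)\<^sup>2) + - of_real \<tau> * of_real ((cmod ?b)\<^sup>2))
      = r - 2 * (r + 1)"
    using b by (simp add: r \<tau>_def)
  finally show False using r by simp
qed

lemma positive_semidef_leading_block:
  assumes "positive_semidef (Suc n) \<rho>" shows "positive_semidef n \<rho>"
proof -
  have "0 \<le> Re (cinner n x (mat_vec n \<rho> x))" for x
    using positive_semidef_quadratic_form[OF assms, of "\<lambda>k. if k < n then x k else 0"]
    by (simp add: cinner_def mat_vec_def)
  moreover have "\<rho> j i = cnj (\<rho> i j)" if "i < n" "j < n" for i j
    by (rule positive_semidef_hermitian[OF assms]) (use that in auto)
  ultimately show ?thesis unfolding positive_semidef_def by blast
qed

lemma positive_semidef_Schur_complement: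
  assumes "positive_semidef (Suc n) \<rho>" "\<rho> n n \<noteq> 0"
  shows "positive_semidef n (\<lambda>k l. \<rho> k l - \<rho> k n * \<rho> n l / \<rho> n n)"
  unfolding positive_semidef_def cinner_def mat_vec_def
proof (intro conjI allI impI)
  have herm: "\<And>i j. i < Suc n \<Longrightarrow> j < Suc n \<Longrightarrow> \<rho> j i = cnj (\<rho> i j)"
    using positive_semidef_hermitian[OF assms(1)] by blast
  have nn: "cnj (\<rho> n n) = \<rho> n n" using herm[of n n] by simp
  fix i j assume "i < n" "j < n"
  thus "\<rho> j i - \<rho> j n * \<rho> n i / \<rho> n n = cnj (\<rho> i j - \<rho> i n * \<rho> n j / \<rho> n n)"
    using herm[of i j] herm[of i n] herm[of n j] nn by (simp add: mult.commute)
next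
  fix x :: "nat \<Rightarrow> complex"
  define \<beta> where "\<beta> = (\<Sum>l<n. \<rho> n l * x l)"
  define t where "t = - \<beta> / \<rho> n n"
  have schur_x: "(\<Sum>l<n. (\<rho> k l - \<rho> k n * \<rho> n l / \<rho> n n) * x l) = (\<Sum>l<n. \<rho> k l * x l) + \<rho> k n * t" for k
  proof -
    have "(\<Sum>l<n. (\<rho> k l - \<rho> k n * \<rho> n l / \<rho> n n) * x l) = (\<Sum>l<n. \<rho> k l * x l) - \<rho> k n / \<rho> n n * \<beta>"
      by (simp add: \<beta>_def sum_distrib_left left_diff_distrib sum_subtractf algebra_simps)
    thus ?thesis by (simp add: t_def)
  qed
  have t: "\<beta> + \<rho> n n * t = 0" using assms(2) by (simp add: t_def)
  \<comment> \<open>the Schur complement form at \<open>x\<close> is the form of \<open>\<rho>\<close> at \<open>(x, t)\<close>\<close>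
  have "0 \<le> Re (\<Sum>k<Suc n. cnj (if k < n then x k else t) * (\<Sum>l<Suc n. \<rho> k l * (if l < n then x l else t)))"
    by (rule positive_semidef_quadratic_form[OF assms(1)])
  also have "(\<Sum>k<Suc n. cnj (if k < n then x k else t) * (\<Sum>l<Suc n. \<rho> k l * (if l < n then x l else t)))
      = (\<Sum>k<n. cnj (x k) * ((\<Sum>l<n. \<rho> k l * x l) + \<rho> k n * t)) + cnj t * (\<beta> + \<rho> n n * t)"
    by (simp add: \<beta>_def)
  also have "\<dots> = (\<Sum>k<n. cnj (x k) * (\<Sum>l<n. (\<rho> k l - \<rho> k n * \<rho> n l / \<rho> n n) * x l))"
    by (simp only: schur_x t mult_zero_right add_0_right)
  finally show "0 \<le> Re (\<Sum>k<n. cnj (x k) * (\<Sum>l<n. (\<rho> k l - \<rho> k n * \<rho> n l / \<rho> n n) * x l))" .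
qed

lemma gram_decomp_extend_zero:
  assumes v: "gram_decomp n \<rho> v" and zero: "\<And>k. k < Suc n \<Longrightarrow> \<rho> k n = 0 \<and> \<rho> n k = 0"
  shows "gram_decomp (Suc n) \<rho> (\<lambda>m k. if m < n \<and> k < n then v m k else 0)"
  unfolding gram_decomp_def
proof (intro allI impI)
  fix k l assume kl: "k < Suc n" "l < Suc n"
  show "\<rho> k l = (\<Sum>m<Suc n. (if m < n \<and> k < n then v m k else 0) * cnj (if m < n \<and> l < n then v m l else 0))"
  proof (cases "k < n \<and> l < n")
    case True thus ?thesis using v by (simp add: gram_decomp_def)
  next
    case False
    hence "k = n \<or> l = n" using kl by auto
    thus ?thesis using zero kl by auto
  qed
qed

lemma gram_decomp_extend_Schur:
  assumes v: "gram_decomp n (\<lambda>k l. \<rho> k l - \<rho> k n * \<rho> n l / \<rho> n n) v"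
    and r: "\<rho> n n = of_real r" "0 < r" and herm: "\<And>l. l < Suc n \<Longrightarrow> \<rho> n l = cnj (\<rho> l n)"
  shows "gram_decomp (Suc n) \<rho> (\<lambda>m k. if m < n then (if k < n then v m k else 0) else \<rho> k n / of_real (sqrt r))"
  unfolding gram_decomp_def
proof (intro allI impI)
  define w where "w k = \<rho> k n / of_real (sqrt r)" for k
  have w: "w k * cnj (w l) = \<rho> k n * \<rho> n l / \<rho> n n" if "l < Suc n" for k l
  proof -
    have "of_real (sqrt r) * of_real (sqrt r) = (of_real r :: complex)"
      using r(2) by (simp flip: of_real_mult)
    thus ?thesis using herm[OF that] r(1) by (simp add: w_def times_divide_times_eq)
  qed
  fix k l assume kl: "k < Suc n" "l < Suc n"
  have "(\<Sum>m<Suc n. (if m < n then (if k < n then v m k else 0) else w k) *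
                    cnj (if m < n then (if l < n then v m l else 0) else w l))
     = (\<Sum>m<n. (if k < n then v m k else 0) * cnj (if l < n then v m l else 0)) + w k * cnj (w l)"
    by simp
  also have "\<dots> = \<rho> k l"
  proof (cases "k < n \<and> l < n")
    case True
    hence h: "\<rho> k l - \<rho> k n * \<rho> n l / \<rho> n n = (\<Sum>m<n. v m k * cnj (v m l))"
      using v unfolding gram_decomp_def by blast
    show ?thesis using True by (simp add: w[OF kl(2)] flip: h)
  next
    case False
    hence "k = n \<or> l = n" using kl by auto
    thus ?thesis using False w[OF kl(2)] r by auto
  qed
  finally show "\<rho> k l = (\<Sum>m<Suc n. (if m < n then (if k < n then v m k else 0) else \<rho> k n / of_real (sqrt r)) *
                    cnj (if m < n then (if l < n then v m l else 0) else \<rho> l n / of_real (sqrt r)))"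
    by (simp add: w_def)
qed

text \<open>A Cholesky-type factorisation, by induction on the dimension: split off the last row and
  column, and use the Schur complement when the last diagonal entry does not vanish.\<close>

lemma positive_semidef_gram_decomp:
  "positive_semidef n \<rho> \<Longrightarrow> \<exists>v. gram_decomp n \<rho> v"
proof (induction n arbitrary: \<rho>)
  case 0 show ?case by (simp add: gram_decomp_def)
next
  case (Suc n)
  have herm: "\<And>l. l < Suc n \<Longrightarrow> \<rho> n l = cnj (\<rho> l n)"
    using positive_semidef_hermitian[OF Suc.prems] by blast
  show ?case
  proof (cases "\<rho> n n = 0")
    case True
    obtain v where "gram_decomp n \<rho> v"
      using Suc.IH[OF positive_semidef_leading_block[OF Suc.prems]] by blast
    moreover have "\<rho> k n = 0 \<and> \<rho> n k = 0" if "k < Suc n" for k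
      using positive_semidef_zero_diag[OF Suc.prems True, of k] True herm[OF that] that
      by (cases "k = n") auto
    ultimately show ?thesis by (blast intro: gram_decomp_extend_zero)
  next
    case False
    have r: "\<rho> n n = of_real (Re (\<rho> n n))" "0 < Re (\<rho> n n)"
      using positive_semidef_diag[OF Suc.prems, of n] False by (auto simp: less_le complex_eq_iff)
    obtain v where v: "gram_decomp n (\<lambda>k l. \<rho> k l - \<rho> k n * \<rho> n l / \<rho> n n) v"
      using Suc.IH[OF positive_semidef_Schur_complement[OF Suc.prems False]] by blast
    show ?thesis using gram_decomp_extend_Schur[OF v r herm] by blast
  qed
qed

section \<open>Measurement statistics of a state\<close>

definition prob_vector :: "'a set \<Rightarrow> ('a \<Rightarrow> real) \<Rightarrow> bool" where
  "prob_vector A p \<longleftrightarrow> finite A \<and> (\<forall>i\<in>A. 0 \<le> p i) \<and> sum p A = 1"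

lemma density_matrix_gram_decomp:
  assumes "density_matrix d \<rho>"
  obtains v where "gram_decomp d \<rho> v" "(\<Sum>m<d. \<Sum>k<d. (cmod (v m k))\<^sup>2) = 1"
proof -
  have "positive_semidef d \<rho>" using assms unfolding density_matrix_def positive_semidef_def by blast
  then obtain v where v: "gram_decomp d \<rho> v" using positive_semidef_gram_decomp by blast
  have "complex_of_real (\<Sum>m<d. \<Sum>k<d. (cmod (v m k))\<^sup>2) = (\<Sum>k<d. \<Sum>m<d. v m k * cnj (v m k))"
    unfolding of_real_sum complex_norm_square by (rule sum.swap)
  also have "\<dots> = (\<Sum>k<d. \<rho> k k)" using v by (simp add: gram_decomp_def)
  also have "\<dots> = 1" using assms unfolding density_matrix_def by blast
  finally show ?thesis using that v by (metis of_real_eq_1_iff)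
qed

lemma gram_decomp_quadratic_form:
  assumes "gram_decomp d \<rho> v"
  shows "Re (cinner d u (mat_vec d \<rho> u)) = (\<Sum>m<d. (cmod (cinner d u (v m)))\<^sup>2)"
proof -
  let ?F = "\<lambda>k l m. cnj (u k) * (v m k * (cnj (v m l) * u l))"
  have "cinner d u (mat_vec d \<rho> u) = (\<Sum>k<d. cnj (u k) * (\<Sum>l<d. (\<Sum>m<d. v m k * cnj (v m l)) * u l))"
    using assms unfolding cinner_def mat_vec_def gram_decomp_def by (intro sum.cong refl) simp
  also have "\<dots> = (\<Sum>k<d. \<Sum>l<d. \<Sum>m<d. ?F k l m)"
    by (simp add: sum_distrib_left sum_distrib_right mult.assoc)
  also have "\<dots> = (\<Sum>k<d. \<Sum>m<d. \<Sum>l<d. ?F k l m)" by (rule sum.cong[OF refl], rule sum.swap)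
  also have "\<dots> = (\<Sum>m<d. \<Sum>k<d. \<Sum>l<d. ?F k l m)" by (rule sum.swap)
  also have "\<dots> = (\<Sum>m<d. cinner d u (v m) * cnj (cinner d u (v m)))"
    unfolding cinner_def cnj_sum sum_product by (simp add: mult_ac)
  also have "\<dots> = of_real (\<Sum>m<d. (cmod (cinner d u (v m)))\<^sup>2)"
    unfolding of_real_sum complex_norm_square ..
  finally show ?thesis by simp
qed

lemma measurement_prob_vector:
  assumes v: "gram_decomp d \<rho> v" and tr: "(\<Sum>m<d. \<Sum>k<d. (cmod (v m k))\<^sup>2) = 1"
    and a: "orthonormal_basis d a"
  shows "prob_vector {..<d} (\<lambda>i. Re (cinner d (a i) (mat_vec d \<rho> (a i))))"
proof -
  have "(\<Sum>i<d. Re (cinner d (a i) (mat_vec d \<rho> (a i)))) = (\<Sum>i<d. \<Sum>m<d. (cmod (cinner d (a i) (v m)))\<^sup>2)"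
    by (simp add: gram_decomp_quadratic_form[OF v])
  also have "\<dots> = (\<Sum>m<d. \<Sum>k<d. (cmod (v m k))\<^sup>2)"
    by (subst sum.swap) (simp add: orthonormal_basis_Parseval[OF a])
  finally show ?thesis
    using tr by (simp add: prob_vector_def gram_decomp_quadratic_form[OF v] sum_nonneg)
qed

lemma mixed_state_bound:
  assumes U: "unitary_mat d U" and oa: "orthonormal_basis d a" and ob: "orthonormal_basis d b"
    and Uab: "\<forall>i<d. \<forall>j<d. U i j = cinner d (a i) (b j)"
    and R: "R \<subseteq> {..<d}" and C: "C \<subseteq> {..<d}"
    and v: "gram_decomp d \<rho> v" and tr: "(\<Sum>m<d. \<Sum>k<d. (cmod (v m k))\<^sup>2) = 1"
  shows "(\<Sum>i\<in>R. Re (cinner d (a i) (mat_vec d \<rho> (a i)))) + (\<Sum>j\<in>C. Re (cinner d (b j) (mat_vec d \<rho> (b j))))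
     \<le> 1 + submatrix_norm U R C"
proof -
  have "(\<Sum>i\<in>R. Re (cinner d (a i) (mat_vec d \<rho> (a i)))) + (\<Sum>j\<in>C. Re (cinner d (b j) (mat_vec d \<rho> (b j))))
     = (\<Sum>m<d. (\<Sum>i\<in>R. (cmod (cinner d (a i) (v m)))\<^sup>2) + (\<Sum>j\<in>C. (cmod (cinner d (b j) (v m)))\<^sup>2))"
    by (simp add: gram_decomp_quadratic_form[OF v] sum.distrib sum.swap[of _ R] sum.swap[of _ C])
  also have "\<dots> \<le> (\<Sum>m<d. (1 + submatrix_norm U R C) * (\<Sum>k<d. (cmod (v m k))\<^sup>2))"
    by (intro sum_mono pure_state_bound[OF U oa ob Uab R C])
  also have "\<dots> = 1 + submatrix_norm U R C" by (simp add: sum_distrib_left[symmetric] tr)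
  finally show ?thesis .
qed

section \<open>The coefficients \<open>s\<^sub>k\<close>\<close>

definition submatrix_norms :: "nat \<Rightarrow> (nat \<Rightarrow> nat \<Rightarrow> complex) \<Rightarrow> nat \<Rightarrow> real set" where
  "submatrix_norms d U k = {submatrix_norm U R C | R C.
       R \<subseteq> {..<d} \<and> C \<subseteq> {..<d} \<and> R \<noteq> {} \<and> C \<noteq> {} \<and> card R + card C = k + 1}"

lemma s_coef_eq_Max: "s_coef d U k = Max (submatrix_norms d U k)"
  unfolding s_coef_def submatrix_norms_def ..

lemma finite_submatrix_norms: "finite (submatrix_norms d U k)"
proof (rule finite_subset)
  show "submatrix_norms d U k \<subseteq> (\<lambda>(R, C). submatrix_norm U R C) ` (Pow {..<d} \<times> Pow {..<d})"
    unfolding submatrix_norms_def by auto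
qed auto

lemma submatrix_norms_nonempty:
  assumes "1 \<le> k" "k \<le> d"
  shows "submatrix_norms d U k \<noteq> {}"
proof -
  have "submatrix_norm U {0} {..<k} \<in> submatrix_norms d U k"
    unfolding submatrix_norms_def using assms by (force simp: lessThan_empty_iff)
  thus ?thesis by blast
qed

lemma submatrix_norm_le_s_coef:
  assumes "R \<subseteq> {..<d}" "C \<subseteq> {..<d}" "R \<noteq> {}" "C \<noteq> {}" "card R + card C = k + 1"
  shows "submatrix_norm U R C \<le> s_coef d U k"
  unfolding s_coef_eq_Max using assms
  by (intro Max_ge[OF finite_submatrix_norms]) (auto simp: submatrix_norms_def)

lemma s_coef_attained:
  assumes "1 \<le> k" "k \<le> d"
  obtains R C where "R \<subseteq> {..<d}" "C \<subseteq> {..<d}" "R \<noteq> {}" "C \<noteq> {}" "card R + card C = k + 1"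
    "s_coef d U k = submatrix_norm U R C"
proof -
  have "s_coef d U k \<in> submatrix_norms d U k"
    unfolding s_coef_eq_Max by (rule Max_in[OF finite_submatrix_norms submatrix_norms_nonempty[OF assms]])
  then obtain R C where "R \<subseteq> {..<d}" "C \<subseteq> {..<d}" "R \<noteq> {}" "C \<noteq> {}" "card R + card C = k + 1"
    "s_coef d U k = submatrix_norm U R C" unfolding submatrix_norms_def by auto
  thus ?thesis by (rule that)
qed

lemma s_coef_nonneg:
  assumes "unitary_mat d U" "1 \<le> k" "k \<le> d"
  shows "0 \<le> s_coef d U k"
proof -
  obtain R C where "R \<subseteq> {..<d}" "C \<subseteq> {..<d}" "R \<noteq> {}" "C \<noteq> {}" "card R + card C = k + 1"
    "s_coef d U k = submatrix_norm U R C" by (rule s_coef_attained[OF assms(2,3)])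
  thus ?thesis using submatrix_norm_nonneg[OF assms(1)] by simp
qed

lemma s_coef_le_one:
  assumes "unitary_mat d U" "1 \<le> k" "k \<le> d"
  shows "s_coef d U k \<le> 1"
proof -
  obtain R C where "R \<subseteq> {..<d}" "C \<subseteq> {..<d}" "R \<noteq> {}" "C \<noteq> {}" "card R + card C = k + 1"
    "s_coef d U k = submatrix_norm U R C" by (rule s_coef_attained[OF assms(2,3)])
  thus ?thesis using submatrix_norm_le_one[OF assms(1)] by simp
qed

text \<open>A maximising submatrix for \<open>k < d\<close> misses some column; adding it gives a candidate for \<open>k + 1\<close>.\<close>

lemma s_coef_mono:
  assumes U: "unitary_mat d U" and k: "1 \<le> k" "k < d"
  shows "s_coef d U k \<le> s_coef d U (Suc k)"
proof -
  obtain R C where RC: "R \<subseteq> {..<d}" "C \<subseteq> {..<d}" "R \<noteq> {}" "C \<noteq> {}" "card R + card C = k + 1"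
    and s: "s_coef d U k = submatrix_norm U R C" using k by (metis s_coef_attained less_imp_le)
  have "card R \<ge> 1" using RC(1,3) finite_subset[OF RC(1)] by (simp add: Suc_le_eq card_gt_0_iff)
  hence "C \<noteq> {..<d}" using RC(5) k(2) by auto
  then obtain j where j: "j < d" "j \<notin> C" using RC(2) by blast
  have fC: "finite C" using finite_subset[OF RC(2)] by simp
  have "s_coef d U k \<le> submatrix_norm U R (insert j C)"
    unfolding s by (rule submatrix_norm_mono_cols[OF U RC(1)]) (use j RC(2) in auto)
  also have "\<dots> \<le> s_coef d U (Suc k)"
    by (rule submatrix_norm_le_s_coef) (use RC j fC in auto)
  finally show ?thesis .
qed

text \<open>The submatrix formed by the first column already has norm one.\<close>

lemma s_coef_top:
  assumes U: "unitary_mat d U" and d: "1 \<le> d"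
  shows "s_coef d U d = 1"
proof (rule antisym)
  show "s_coef d U d \<le> 1" by (rule s_coef_le_one[OF U d order_refl])
  have "complex_of_real (\<Sum>i<d. (cmod (U i 0))\<^sup>2) = (\<Sum>i<d. cnj (U i 0) * U i 0)"
    unfolding of_real_sum complex_norm_square by (simp add: mult.commute)
  also have "\<dots> = 1" using U d unfolding unitary_mat_def by auto
  finally have "(\<Sum>i<d. (cmod (U i 0))\<^sup>2) = 1" by (simp only: of_real_eq_1_iff)
  hence "1 \<in> submatrix_image_norms U {..<d} {0}"
    unfolding submatrix_image_norms_def by (intro CollectI exI[of _ "\<lambda>j. if j = 0 then 1 else 0"]) simp
  hence "1 \<le> submatrix_norm U {..<d} {0}"
    using d by (intro submatrix_norm_upper[OF U]) auto
  also have "\<dots> \<le> s_coef d U d"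
    using d by (intro submatrix_norm_le_s_coef) (auto simp: lessThan_empty_iff)
  finally show "1 \<le> s_coef d U d" .
qed

text \<open>The vector \<open>(1, W\<^sub>1, \<dots>, W\<^sub>d, 0, \<dots>)\<close>, whose partial sums are \<open>1 + s\<^sub>k\<close>; it majorises the
  concatenation of the two measurement distributions.\<close>

definition majorant :: "nat \<Rightarrow> (nat \<Rightarrow> nat \<Rightarrow> complex) \<Rightarrow> nat \<Rightarrow> real" where
  "majorant d U k = (if k = 0 then 1 else if k \<le> d then W_vec d U k else 0)"

lemma sum_majorant:
  assumes U: "unitary_mat d U" and d: "1 \<le> d"
  shows "(\<Sum>i<Suc k. majorant d U i) = (if k = 0 then 1 else if k < d then 1 + s_coef d U k else 2)"
proof (induction k)
  case 0 thus ?case by (simp add: majorant_def)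
next
  case (Suc k)
  have top: "s_coef d U d = 1" by (rule s_coef_top[OF U d])
  show ?case
  proof (cases "k = 0")
    case True
    thus ?thesis using Suc d top by (cases "d = 1") (auto simp: majorant_def W_vec_def)
  next
    case False
    thus ?thesis using Suc top by (cases "Suc k \<le> d") (auto simp: majorant_def W_vec_def)
  qed
qed

lemma W_vec_nonneg:
  assumes U: "unitary_mat d U" and k: "1 \<le> k" "k \<le> d"
  shows "0 \<le> W_vec d U k"
proof (cases "k = 1")
  case True thus ?thesis using s_coef_nonneg[OF U order_refl] k by (simp add: W_vec_def)
next
  case False
  thus ?thesis using s_coef_mono[OF U, of "k - 1"] k by (simp add: W_vec_def)
qed

lemma majorant_nonneg: "unitary_mat d U \<Longrightarrow> 0 \<le> majorant d U k"
  by (simp add: majorant_def W_vec_nonneg)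

lemma sum_majorant_split:
  assumes "1 \<le> d" "d < n" "f 0 = 0"
  shows "(\<Sum>i<n. f (majorant d U i)) = f 1 + (\<Sum>k\<in>{1..d}. f (W_vec d U k))"
proof -
  have "(\<Sum>i<n. f (majorant d U i)) = (\<Sum>i\<in>insert 0 {1..d}. f (majorant d U i))"
    using assms by (intro sum.mono_neutral_right) (auto simp: majorant_def)
  also have "\<dots> = f 1 + (\<Sum>k\<in>{1..d}. f (W_vec d U k))"
    by (simp add: majorant_def)
  finally show ?thesis .
qed

lemma W_vec_prob_vector:
  assumes U: "unitary_mat d U" and d: "1 \<le> d"
  shows "prob_vector {1..d} (W_vec d U)"
proof -
  have "2 = (\<Sum>i<Suc d. majorant d U i)" using sum_majorant[OF U d, of d] d by simp
  also have "\<dots> = 1 + (\<Sum>k\<in>{1..d}. W_vec d U k)"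
    using sum_majorant_split[OF d, of "Suc d" "\<lambda>t. t"] by simp
  finally show ?thesis using W_vec_nonneg[OF U] by (simp add: prob_vector_def)
qed

lemma marginal_sums_le_majorant:
  assumes U: "unitary_mat d U" and d: "1 \<le> d"
    and p: "prob_vector {..<d} p" and q: "prob_vector {..<d} q"
    and weight_bound: "\<And>R C. R \<subseteq> {..<d} \<Longrightarrow> C \<subseteq> {..<d} \<Longrightarrow> sum p R + sum q C \<le> 1 + submatrix_norm U R C"
    and R: "R \<subseteq> {..<d}" and C: "C \<subseteq> {..<d}"
  shows "sum p R + sum q C \<le> (\<Sum>i<card R + card C. majorant d U i)"
proof -
  have finR: "finite R" and finC: "finite C" using R C finite_subset by blast+
  have pR: "0 \<le> sum p R" "sum p R \<le> 1" and qC: "0 \<le> sum q C" "sum q C \<le> 1"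
    using p q R C sum_mono2[of "{..<d}" R p] sum_mono2[of "{..<d}" C q]
    by (auto simp: prob_vector_def intro!: sum_nonneg)
  show ?thesis
  proof (cases "card R + card C")
    case 0 thus ?thesis using finR finC by simp
  next
    case (Suc k)
    have Y: "(\<Sum>i<card R + card C. majorant d U i) = (if k = 0 then 1 else if k < d then 1 + s_coef d U k else 2)"
      unfolding Suc by (rule sum_majorant[OF U d])
    show ?thesis
    proof (cases "R = {} \<or> C = {} \<or> d \<le> k")
      case True
      thus ?thesis unfolding Y using pR qC s_coef_nonneg[OF U, of k] d by auto
    next
      case False
      have "card R \<ge> 1" "card C \<ge> 1" using False finR finC by (auto simp: Suc_le_eq card_gt_0_iff)
      hence "1 \<le> k" "card R + card C = k + 1" using Suc by auto
      hence "submatrix_norm U R C \<le> s_coef d U k"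
        using False by (intro submatrix_norm_le_s_coef[OF R C]) auto
      thus ?thesis unfolding Y using weight_bound[OF R C] False \<open>1 \<le> k\<close> by auto
    qed
  qed
qed

section \<open>Majorisation and concave functions\<close>

definition is_supergradient :: "(real \<Rightarrow> real) \<Rightarrow> (real \<Rightarrow> real) \<Rightarrow> bool" where
  "is_supergradient \<phi> g \<longleftrightarrow> (\<forall>u v. 0 < u \<longrightarrow> 0 \<le> v \<longrightarrow> \<phi> v \<le> \<phi> u + g u * (v - u))"

lemma supergradientD: "is_supergradient \<phi> g \<Longrightarrow> 0 < u \<Longrightarrow> 0 \<le> v \<Longrightarrow> \<phi> v \<le> \<phi> u + g u * (v - u)"
  unfolding is_supergradient_def by blast

lemma supergradient_antimono:
  assumes "is_supergradient \<phi> g" "0 < u" "u \<le> v"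
  shows "g v \<le> g u"
proof (cases "u = v")
  case False
  have "\<phi> v \<le> \<phi> u + g u * (v - u)" "\<phi> u \<le> \<phi> v + g v * (u - v)"
    using supergradientD[OF assms(1)] assms(2,3) by auto
  hence "0 \<le> (g u - g v) * (v - u)" by (simp add: algebra_simps)
  thus ?thesis using False assms(3) by (simp add: zero_le_mult_iff)
qed simp

lemma abel_sum_le:
  fixes g e :: "nat \<Rightarrow> real"
  assumes "\<And>i. Suc i < n \<Longrightarrow> g i \<le> g (Suc i)" and "\<And>m. m \<le> n \<Longrightarrow> 0 \<le> (\<Sum>i<m. e i)"
  shows "(\<Sum>i<n. g i * e i) \<le> g (n - 1) * (\<Sum>i<n. e i)"
  using assms
proof (induction n)
  case 0 thus ?case by simp
next
  case (Suc n)
  have "(\<Sum>i<n. g i * e i) \<le> g (n - 1) * (\<Sum>i<n. e i)" using Suc by auto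
  also have "\<dots> \<le> g n * (\<Sum>i<n. e i)"
  proof (rule mult_right_mono)
    show "g (n - 1) \<le> g n" using Suc.prems(1) by (cases n) auto
    show "0 \<le> (\<Sum>i<n. e i)" using Suc.prems(2)[of n] by simp
  qed
  finally show ?case by (simp add: distrib_left)
qed

text \<open>Karamata's inequality for a decreasingly ordered \<open>x\<close>, by Abel summation of the
  supergradient inequalities \<open>\<phi>(y\<^sub>i) - \<phi>(x\<^sub>i) \<le> g(x\<^sub>i)(y\<^sub>i - x\<^sub>i)\<close>. Where \<open>x\<^sub>i = 0\<close> no supergradient is
  available, but there \<open>y\<^sub>i = 0\<close> as well.\<close>

lemma majorization_concave_sum_le_sorted:
  fixes x y :: "nat \<Rightarrow> real"
  assumes x_dec: "\<And>i j. i \<le> j \<Longrightarrow> j < n \<Longrightarrow> x j \<le> x i"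
    and x0: "\<And>i. i < n \<Longrightarrow> 0 \<le> x i" and y0: "\<And>i. i < n \<Longrightarrow> 0 \<le> y i"
    and prefix: "\<And>m. m \<le> n \<Longrightarrow> (\<Sum>i<m. x i) \<le> (\<Sum>i<m. y i)"
    and total: "(\<Sum>i<n. x i) = (\<Sum>i<n. y i)"
    and sg: "is_supergradient \<phi> g"
  shows "(\<Sum>i<n. \<phi> (y i)) \<le> (\<Sum>i<n. \<phi> (x i))"
proof -
  have y_zero: "y i = 0" if i: "i < n" "x i = 0" for i
  proof -
    have "x j = 0" if "i \<le> j" "j < n" for j using x_dec[OF that] x0[OF that(2)] i(2) by simp
    hence "(\<Sum>j<n. x j) = (\<Sum>j<i. x j)"
      using i by (intro sum.mono_neutral_right) auto
    hence "(\<Sum>j<n. y j) \<le> (\<Sum>j<i. y j)" using total prefix[of i] i by simp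
    moreover have "(\<Sum>j<Suc i. y j) \<le> (\<Sum>j<n. y j)" by (rule sum_mono2) (use i y0 in auto)
    ultimately show ?thesis using y0[OF i(1)] by simp
  qed
  define L where "L = Max (insert 0 ((\<lambda>i. g (x i)) ` {i. i < n \<and> 0 < x i}))"
  have L: "g (x i) \<le> L" if "i < n" "0 < x i" for i
    unfolding L_def by (rule Max_ge) (use that in auto)
  define G where "G i = (if 0 < x i then g (x i) else L)" for i
  define e where "e i = y i - x i" for i
  have G_mono: "G i \<le> G (Suc i)" if "Suc i < n" for i
    using that L[of i] x_dec[of i "Suc i"] supergradient_antimono[OF sg, of "x (Suc i)" "x i"]
    by (auto simp: G_def)
  have e_prefix: "0 \<le> (\<Sum>i<m. e i)" if "m \<le> n" for m
    using prefix[OF that] by (simp add: e_def sum_subtractf)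
  have step: "\<phi> (y i) - \<phi> (x i) \<le> G i * e i" if "i < n" for i
  proof (cases "0 < x i")
    case True
    thus ?thesis using supergradientD[OF sg True y0[OF that]] by (simp add: G_def e_def)
  next
    case False
    thus ?thesis using x0[OF that] y_zero[OF that] by (simp add: e_def)
  qed
  have "(\<Sum>i<n. \<phi> (y i)) - (\<Sum>i<n. \<phi> (x i)) \<le> (\<Sum>i<n. G i * e i)"
    unfolding sum_subtractf[symmetric] by (intro sum_mono step) simp
  also have "\<dots> \<le> G (n - 1) * (\<Sum>i<n. e i)" by (rule abel_sum_le[of n G e, OF G_mono e_prefix])
  also have "(\<Sum>i<n. e i) = 0" using total by (simp add: e_def sum_subtractf)
  finally show ?thesis by simp
qed

text \<open>The hypothesis on \<open>x\<close> concerns all subsets of \<open>I\<close>, so it survives sorting \<open>x\<close> decreasingly,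
  which reduces the claim to the previous lemma.\<close>

lemma majorization_concave_sum_le:
  fixes x :: "'a \<Rightarrow> real" and y :: "nat \<Rightarrow> real"
  assumes I: "finite I" and x0: "\<And>i. i \<in> I \<Longrightarrow> 0 \<le> x i" and y0: "\<And>i. i < card I \<Longrightarrow> 0 \<le> y i"
    and subset: "\<And>S. S \<subseteq> I \<Longrightarrow> sum x S \<le> (\<Sum>i<card S. y i)"
    and total: "sum x I = (\<Sum>i<card I. y i)"
    and sg: "is_supergradient \<phi> g"
  shows "(\<Sum>i<card I. \<phi> (y i)) \<le> (\<Sum>i\<in>I. \<phi> (x i))"
proof -
  obtain xs where xs: "set xs = I" "distinct xs" using finite_distinct_list[OF I] by blast
  define ys where "ys = sort_key (\<lambda>i. - x i) xs"
  have ys: "distinct ys" "set ys = I" "length ys = card I"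
    using xs by (simp_all add: ys_def distinct_card[symmetric])
  define \<sigma> where "\<sigma> k = ys ! k" for k
  have bij: "bij_betw \<sigma> {..<card I} I"
    unfolding \<sigma>_def by (rule bij_betw_nth) (use ys in auto)
  have \<sigma>: "\<sigma> k \<in> I" if "k < card I" for k using bij that by (auto dest: bij_betw_apply)
  have x_dec: "x (\<sigma> j) \<le> x (\<sigma> i)" if "i \<le> j" "j < card I" for i j
  proof -
    have "sorted (map (\<lambda>i. - x i) ys)" by (simp add: ys_def)
    hence "map (\<lambda>i. - x i) ys ! i \<le> map (\<lambda>i. - x i) ys ! j"
      by (rule sorted_nth_mono) (use that ys in auto)
    thus ?thesis using that ys by (simp add: \<sigma>_def)
  qed
  have reindex: "(\<Sum>k<card I. f (\<sigma> k)) = (\<Sum>i\<in>I. f i)" for f :: "'a \<Rightarrow> real"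
    by (rule sum.reindex_bij_betw[OF bij])
  have prefix: "(\<Sum>i<m. x (\<sigma> i)) \<le> (\<Sum>i<m. y i)" if m: "m \<le> card I" for m
  proof -
    have inj: "inj_on \<sigma> {..<m}" by (rule inj_on_subset[OF bij_betw_imp_inj_on[OF bij]]) (use m in auto)
    have "(\<Sum>i<m. x (\<sigma> i)) = sum x (\<sigma> ` {..<m})" by (simp add: sum.reindex[OF inj])
    also have "\<dots> \<le> (\<Sum>i<card (\<sigma> ` {..<m}). y i)" by (rule subset) (use \<sigma> m in auto)
    finally show ?thesis by (simp add: card_image[OF inj])
  qed
  have "(\<Sum>i<card I. \<phi> (y i)) \<le> (\<Sum>k<card I. \<phi> (x (\<sigma> k)))"
    by (rule majorization_concave_sum_le_sorted[OF x_dec _ y0 prefix _ sg])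
      (use x0 \<sigma> total reindex[of x] in auto)
  thus ?thesis using reindex[of "\<lambda>i. \<phi> (x i)"] by simp
qed

lemma supergradient_powr:
  assumes "0 < \<alpha>" "\<alpha> \<le> 1"
  shows "is_supergradient (\<lambda>t. t powr \<alpha>) (\<lambda>u. \<alpha> * u powr (\<alpha> - 1))"
  unfolding is_supergradient_def
proof (intro allI impI)
  fix u v :: real assume u: "0 < u" and v: "0 \<le> v"
  have u_pow: "u * u powr (\<alpha> - 1) = u powr \<alpha>" using u by (simp add: powr_mult_base)
  show "v powr \<alpha> \<le> u powr \<alpha> + \<alpha> * u powr (\<alpha> - 1) * (v - u)"
  proof (cases "v = 0")
    case True
    thus ?thesis using assms u_pow mult_left_le_one_le[of "u powr \<alpha>" \<alpha>] by (simp add: algebra_simps)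
  next
    case False
    \<comment> \<open>weighted AM-GM for \<open>v\<close> and \<open>u\<close> with weights \<open>\<alpha>\<close> and \<open>1 - \<alpha>\<close>\<close>
    have "v powr \<alpha> = v powr \<alpha> * u powr (1 - \<alpha>) * u powr (\<alpha> - 1)"
      using u by (simp add: mult.assoc powr_add[symmetric])
    also have "\<dots> \<le> (\<alpha> * v + (1 - \<alpha>) * u) * u powr (\<alpha> - 1)"
      using Youngs_inequality_0[of \<alpha> "1 - \<alpha>" v u] assms u v False by (simp add: mult_right_mono)
    also have "\<dots> = u powr \<alpha> + \<alpha> * u powr (\<alpha> - 1) * (v - u)"
      using u_pow by (simp add: algebra_simps)
    finally show ?thesis .
  qed
qed

lemma supergradient_entropy: "is_supergradient (\<lambda>t. - (t * ln t)) (\<lambda>u. - ln u - 1)"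
  unfolding is_supergradient_def
proof (intro allI impI)
  fix u v :: real assume u: "0 < u" and v: "0 \<le> v"
  show "- (v * ln v) \<le> - (u * ln u) + (- ln u - 1) * (v - u)"
  proof (cases "v = 0")
    case False
    hence v: "0 < v" using v by simp
    have "ln (u / v) \<le> u / v - 1" using u v by (intro ln_le_minus_one) simp
    hence "v * (ln u - ln v) \<le> v * (u / v - 1)" using u v by (simp add: ln_div)
    thus ?thesis using v by (simp add: algebra_simps)
  qed (use u in \<open>simp add: algebra_simps\<close>)
qed

section \<open>Renyi entropies\<close>

lemma sum_powr_ge_one:
  assumes "prob_vector A p" "\<alpha> \<le> 1"
  shows "1 \<le> (\<Sum>i\<in>A. p i powr \<alpha>)"
proof -
  have "p i \<le> p i powr \<alpha>" if "i \<in> A" for i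
  proof -
    have "p i \<le> 1" using assms(1) that member_le_sum[of i A p] by (auto simp: prob_vector_def)
    hence "p i powr 1 \<le> p i powr \<alpha>" using assms that by (intro powr_mono') (auto simp: prob_vector_def)
    thus ?thesis using assms(1) that by (simp add: prob_vector_def)
  qed
  hence "sum p A \<le> (\<Sum>i\<in>A. p i powr \<alpha>)" by (rule sum_mono)
  thus ?thesis using assms(1) by (simp add: prob_vector_def)
qed

lemma renyi_le_add_of_concave_sums_le:
  assumes "0 < \<alpha>" "\<alpha> \<le> 1"
    and p: "prob_vector A p" and q: "prob_vector B q" and w: "prob_vector C w"
    and concave: "\<And>\<phi> g. is_supergradient \<phi> g \<Longrightarrow> \<phi> 0 = 0 \<Longrightarrow>
        \<phi> 1 + (\<Sum>k\<in>C. \<phi> (w k)) \<le> (\<Sum>i\<in>A. \<phi> (p i)) + (\<Sum>i\<in>B. \<phi> (q i))"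
  shows "renyi \<alpha> C w \<le> renyi \<alpha> A p + renyi \<alpha> B q"
proof (cases "\<alpha> = 1")
  case True
  thus ?thesis using concave[OF supergradient_entropy] by (simp add: renyi_def sum_negf)
next
  case False
  define X Y Z where "X = (\<Sum>i\<in>A. p i powr \<alpha>)" "Y = (\<Sum>i\<in>B. q i powr \<alpha>)" "Z = (\<Sum>k\<in>C. w k powr \<alpha>)"
  have sum: "1 + Z \<le> X + Y" using concave[OF supergradient_powr[OF assms(1,2)]] by (simp add: X_Y_Z_def)
  have X: "1 \<le> X" and Y: "1 \<le> Y" and Z: "1 \<le> Z"
    using sum_powr_ge_one assms(2) p q w by (simp_all add: X_Y_Z_def)
  have "Z \<le> X * Y" using sum mult_nonneg_nonneg[of "X - 1" "Y - 1"] X Y by (simp add: algebra_simps)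
  hence "ln Z \<le> ln (X * Y)" using X Y Z by simp
  also have "\<dots> = ln X + ln Y" using X Y by (simp add: ln_mult)
  finally have "ln Z \<le> ln X + ln Y" .
  hence "ln Z / (1 - \<alpha>) \<le> (ln X + ln Y) / (1 - \<alpha>)"
    using False assms(2) by (intro divide_right_mono) auto
  thus ?thesis using False by (simp add: renyi_def X_Y_Z_def add_divide_distrib)
qed

lemma sum_case_sum_split:
  fixes S :: "('a + 'b) set"
  assumes "finite S"
  shows "sum (case_sum p q) S = sum p (Inl -` S) + sum q (Inr -` S)"
    and "card S = card (Inl -` S) + card (Inr -` S)"
proof -
  have S: "S = Inl -` S <+> Inr -` S"
  proof (rule Set.set_eqI)
    fix x show "x \<in> S \<longleftrightarrow> x \<in> Inl -` S <+> Inr -` S" by (cases x) auto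
  qed
  have fin: "finite (Inl -` S)" "finite (Inr -` S)"
    using finite_vimageI[OF assms inj_Inl] finite_vimageI[OF assms inj_Inr] .
  have "sum (case_sum p q) S = sum (case_sum p q) (Inl -` S <+> Inr -` S)" by (rule arg_cong[OF S])
  also have "\<dots> = sum p (Inl -` S) + sum q (Inr -` S)" by (simp add: sum.Plus[OF fin] comp_def)
  finally show "sum (case_sum p q) S = sum p (Inl -` S) + sum q (Inr -` S)" .
  have "card S = card (Inl -` S <+> Inr -` S)" by (rule arg_cong[OF S])
  also have "\<dots> = card (Inl -` S) + card (Inr -` S)" by (rule card_Plus[OF fin])
  finally show "card S = card (Inl -` S) + card (Inr -` S)" .
qed

lemma concave_sums_le:
  assumes U: "unitary_mat d U" and d: "1 \<le> d"
    and p: "prob_vector {..<d} p" and q: "prob_vector {..<d} q"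
    and weight_bound: "\<And>R C. R \<subseteq> {..<d} \<Longrightarrow> C \<subseteq> {..<d} \<Longrightarrow> sum p R + sum q C \<le> 1 + submatrix_norm U R C"
    and sg: "is_supergradient \<phi> g" and \<phi>0: "\<phi> 0 = 0"
  shows "\<phi> 1 + (\<Sum>k\<in>{1..d}. \<phi> (W_vec d U k)) \<le> (\<Sum>i<d. \<phi> (p i)) + (\<Sum>i<d. \<phi> (q i))"
proof -
  let ?I = "{..<d} <+> {..<d}"
  have fin: "finite ?I" and card: "card ?I = d + d" by (simp_all add: card_Plus)
  have sum_I: "(\<Sum>i\<in>?I. f (case_sum p q i)) = (\<Sum>i<d. f (p i)) + (\<Sum>i<d. f (q i))" for f :: "real \<Rightarrow> real"
    by (simp add: sum.Plus comp_def)
  have "\<phi> 1 + (\<Sum>k\<in>{1..d}. \<phi> (W_vec d U k)) = (\<Sum>i<card ?I. \<phi> (majorant d U i))"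
    unfolding card using d by (intro sum_majorant_split[symmetric] \<phi>0) auto
  also have "\<dots> \<le> (\<Sum>i\<in>?I. \<phi> (case_sum p q i))"
  proof (rule majorization_concave_sum_le[OF fin _ _ _ _ sg])
    show "\<And>i. i \<in> ?I \<Longrightarrow> 0 \<le> case_sum p q i" using p q by (auto simp: prob_vector_def)
    show "\<And>i. i < card ?I \<Longrightarrow> 0 \<le> majorant d U i" using majorant_nonneg[OF U] by blast
    have "Suc (d + d - 1) = d + d" using d by simp
    hence "(\<Sum>i<d + d. majorant d U i) = 2" using sum_majorant[OF U d, of "d + d - 1"] d by simp
    thus "sum (case_sum p q) ?I = (\<Sum>i<card ?I. majorant d U i)"
      using sum_I[of "\<lambda>t. t"] p q by (simp add: card prob_vector_def)
    fix S assume "S \<subseteq> ?I"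
    hence S: "finite S" "Inl -` S \<subseteq> {..<d}" "Inr -` S \<subseteq> {..<d}" using finite_subset[OF _ fin] by auto
    show "sum (case_sum p q) S \<le> (\<Sum>i<card S. majorant d U i)"
      unfolding sum_case_sum_split[OF S(1)] by (rule marginal_sums_le_majorant[OF U d p q weight_bound S(2,3)])
  qed
  also have "\<dots> = (\<Sum>i<d. \<phi> (p i)) + (\<Sum>i<d. \<phi> (q i))" by (rule sum_I)
  finally show ?thesis .
qed

theorem theorem2:
  fixes d :: nat and U \<rho> a b :: "nat \<Rightarrow> nat \<Rightarrow> complex" and \<alpha> :: real
  assumes "d \<ge> 1"
    and "unitary_mat d U"
    and "orthonormal_basis d a" and "orthonormal_basis d b"
    and "\<forall>i<d. \<forall>j<d. U i j = cinner d (a i) (b j)"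
    and "density_matrix d \<rho>"
    and "0 < \<alpha>" and "\<alpha> \<le> 1"
  shows "renyi \<alpha> {..<d} (\<lambda>i. Re (cinner d (a i) (mat_vec d \<rho> (a i))))
       + renyi \<alpha> {..<d} (\<lambda>j. Re (cinner d (b j) (mat_vec d \<rho> (b j))))
       \<ge> renyi \<alpha> {1..d} (W_vec d U)"
proof -
  obtain v where v: "gram_decomp d \<rho> v" and tr: "(\<Sum>m<d. \<Sum>k<d. (cmod (v m k))\<^sup>2) = 1"
    using density_matrix_gram_decomp[OF assms(6)] .
  let ?p = "\<lambda>i. Re (cinner d (a i) (mat_vec d \<rho> (a i)))"
  let ?q = "\<lambda>j. Re (cinner d (b j) (mat_vec d \<rho> (b j)))"
  have p: "prob_vector {..<d} ?p" and q: "prob_vector {..<d} ?q"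
    using measurement_prob_vector[OF v tr] assms(3,4) by blast+
  have weight_bound: "sum ?p R + sum ?q C \<le> 1 + submatrix_norm U R C" if "R \<subseteq> {..<d}" "C \<subseteq> {..<d}" for R C
    using mixed_state_bound[OF assms(2-5) that v tr] .
  show ?thesis
    using renyi_le_add_of_concave_sums_le[OF assms(7,8) p q W_vec_prob_vector[OF assms(2,1)]]
      concave_sums_le[OF assms(2,1) p q weight_bound] by blast
qed

end
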